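(* Let $X=\{v_1,\dots,v_n\}$ be a finite set, let $w:X\to\mathbb{R}^+$ be a weight function normalized so that $\min_{v\in X}w(v)=1$, and put $w_{\max}=\max_{v\in X}w(v)$. Let $g:2^X\to\mathbb{R}^+$ be monotone nondecreasing with $g(\emptyset)=0$. Consider the minimum general cover problem: minimize $w(C)=\sum_{x\in C}w(x)$ over $C\subseteq X$ subject to $g(C)=g(X)$. Let $C^*$ be an optimal solution, $opt=w(C^* )$, and \[\delta=\min\{g(C\cup\{v\})-g(C)\;:\; C\subset X,\ v\in X\setminus C,\ g(C\cup\{v\})>g(C)\}.\] Suppose that (i) for every $C\subset X$ with $g(C)<g(X)$ there is $v\in X\setminus C$ with $g(C\cup\{v\})-g(C)>0$; and (ii) there is a constant $p$ such that for every $C\subset X$ the elements of $C^*\setminus C$ can be ordered as $v_1,\dots,v_t,v_{t+1},\dots,v_{\hat t}$, where, writing $C^*_0=\emptyset$ and $C^*_i=\{v_1,\dots,v_i\}$, $t$ is the smallest index with $g(C^*_t\cup C)=g(X)$, and for all $i=1,\dots,t$, \[ g(C^*_{i-1}\cup C\cup\{v_i\})-g(C^*_{i-1}\cup C)\le g(C\cup\{v_i\})-g(C)+p.\] Then the greedy algorithm — which starts with $C=\emptyset$ and, while $g(C)<g(X)$, adds to $C$ an element $b\in\arg\max_{v\in X\setminus C}\frac{g(C\cup\{v\})-g(C)}{w(v)}$ — outputs a feasible set $C$ with \[ w(C)\le \left((p+1)\frac{w_{\max}}{\delta}+\ln\frac{g(X)-p\cdot opt}{opt}\right)opt,\] where the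 term $\ln\frac{g(X)-p\cdot opt}{opt}$ is interpreted as $0$ if $g(X)-(p+1)\cdot opt\le 0$.
   Context: $\mathbb{R}^+$ denotes the positive reals. The normalization that the cheapest element has weight $1$ is a standing convention of the paper (so $w_{\max}$ is the ratio of the largest to the smallest weight). "Approximation ratio" means the ratio of the weight of the returned solution to $opt$. *)

theory Defs
  imports Complex_Main
begin

definition wt :: "('a \<Rightarrow> real) \<Rightarrow> 'a set \<Rightarrow> real" where
  "wt w C = (\<Sum>x\<in>C. w x)"

inductive greedy_reach ::
  "'a set \<Rightarrow> ('a \<Rightarrow> real) \<Rightarrow> ('a set \<Rightarrow> real) \<Rightarrow> 'a set \<Rightarrow> bool"
  for X w g where
  start: "greedy_reach X w g {}"
| step: "greedy_reach X w g C \<Longrightarrow> g C < g X \<Longrightarrow> b \<in> X - C \<Longrightarrow>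
         (\<forall>v\<in>X - C. (g (C \<union> {v}) - g C) / w v \<le> (g (C \<union> {b}) - g C) / w b) \<Longrightarrow>
         greedy_reach X w g (C \<union> {b})"

definition greedy_output ::
  "'a set \<Rightarrow> ('a \<Rightarrow> real) \<Rightarrow> ('a set \<Rightarrow> real) \<Rightarrow> 'a set \<Rightarrow> bool" where
  "greedy_output X w g C \<longleftrightarrow> greedy_reach X w g C \<and> \<not> (g C < g X)"

definition min_gain :: "'a set \<Rightarrow> ('a set \<Rightarrow> real) \<Rightarrow> real" where
  "min_gain X g = Min {g (C \<union> {v}) - g C | C v. C \<subset> X \<and> v \<in> X - C \<and> g (C \<union> {v}) > g C}"

definition order_condition ::
  "'a set \<Rightarrow> ('a set \<Rightarrow> real) \<Rightarrow> 'a set \<Rightarrow> real \<Rightarrow> bool" where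
  "order_condition X g Cs p \<longleftrightarrow>
     (\<forall>C. C \<subset> X \<longrightarrow>
        (\<exists>vs. distinct vs \<and> set vs = Cs - C \<and>
           (let t = (LEAST i. g (set (take i vs) \<union> C) = g X) in
              \<forall>i\<in>{1..t}.
                g (set (take (i - 1) vs) \<union> C \<union> {vs ! (i - 1)}) - g (set (take (i - 1) vs) \<union> C)
                  \<le> g (C \<union> {vs ! (i - 1)}) - g C + p)))"

end

theory Submission
  imports Defs
begin

(* Let opt = w(Cs) for the optimum Cs and measure progress by the residual
   R(C) = g(X) - g(C) - p opt.  Telescoping g along the ordering of condition (ii) bounds
   g(X) - g(C) by the marginal gains at C of at most |Cs| <= opt elements, plus p for each of them;
   so the greedy choice b satisfies w(b) R(C) <= opt (g(C + b) - g(C)), and by definition of delta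
   also w(b) <= (w_max / delta) (g(C + b) - g(C)).  Hence every step decreases the potential
   opt ln(max(R, opt) / opt) + (w_max / delta) min(R, opt) by at least w(b): the first bound pays
   for the steps with R > opt, the second for the others.  The potential falls from its value at
   R = g(X) - p opt to its value at R = -p opt, and the difference is the claimed bound. *)

definition cover_potential :: "real \<Rightarrow> real \<Rightarrow> real \<Rightarrow> real" where
  "cover_potential opt D R = opt * ln (max R opt / opt) + D * min R opt"

lemma cover_potential_decrease:
  fixes opt D c R R' :: real
  assumes opt: "opt > 0" and "R' < R"
    and linear: "c \<le> D * (R - R')" and logarithmic: "c * R \<le> opt * (R - R')"
  shows "c \<le> cover_potential opt D R - cover_potential opt D R'"
proof (cases "R \<le> opt")
  case True
  then show ?thesis using \<open>R' < R\<close> linear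
    by (simp add: cover_potential_def max_def min_def right_diff_distrib)
next
  case False
  have ln_bound: "1 - x / y \<le> ln (y / x)" if "0 < x" "0 < y" for x y :: real
    using ln_le_minus_one[of "x / y"] that by (simp add: ln_div)
  show ?thesis
  proof (cases "opt \<le> R'")
    case True
    have pos: "R' > 0" "R > 0" using True opt \<open>R' < R\<close> by linarith+
    have "c / opt \<le> 1 - R' / R" using logarithmic opt pos by (simp add: field_simps)
    also have "\<dots> \<le> ln (R / R')" using ln_bound pos by blast
    finally have "c \<le> opt * (ln R - ln R')" using opt pos by (simp add: field_simps ln_div)
    moreover have "max R opt = R" "max R' opt = R'" "min R opt = opt" "min R' opt = opt"
      using True \<open>\<not> R \<le> opt\<close> by auto
    ultimately show ?thesis using pos opt
      by (simp add: cover_potential_def ln_div algebra_simps)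
  next
    case False
    have gap: "R - R' > 0" "opt - R' > 0" "R - opt > 0" using False \<open>\<not> R \<le> opt\<close> by linarith+
    have rate: "c / (R - R') \<le> D" "c / (R - R') \<le> opt / R"
      using linear logarithmic gap opt by (simp_all add: field_simps)
    have "c = c / (R - R') * ((opt - R') + (R - opt))"
      using gap by simp
    also have "\<dots> = c / (R - R') * (opt - R') + c / (R - R') * (R - opt)"
      by (rule distrib_left)
    also have "\<dots> \<le> D * (opt - R') + opt / R * (R - opt)"
      using rate gap by (intro add_mono mult_right_mono) auto
    also have "opt / R * (R - opt) = opt * (1 - opt / R)"
      using gap opt by (simp add: field_simps)
    also have "\<dots> \<le> opt * ln (R / opt)"
      using ln_bound[of opt R] opt gap by (intro mult_left_mono) auto
    finally show ?thesis using gap opt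
      by (simp add: cover_potential_def max_def min_def right_diff_distrib)
  qed
qed

lemma cover_potential_diff_le:
  fixes opt D p G :: real
  assumes opt: "opt > 0" and "D \<ge> 0" "p \<ge> 0"
  shows "cover_potential opt D (G - p * opt) - cover_potential opt D (- p * opt)
    \<le> ((p + 1) * D + (if G - (p + 1) * opt \<le> 0 then 0 else ln ((G - p * opt) / opt))) * opt"
proof -
  have "0 \<le> p * opt" using assms by simp
  then have "- p * opt \<le> opt" using opt by linarith
  then have low: "cover_potential opt D (- p * opt) = - D * p * opt"
    using opt by (simp add: cover_potential_def max_def min_def)
  show ?thesis
  proof (cases "G - (p + 1) * opt \<le> 0")
    case True
    then have "cover_potential opt D (G - p * opt) = D * (G - p * opt)"
      using opt by (simp add: cover_potential_def max_def min_def algebra_simps)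
    moreover have "D * (G - p * opt) \<le> D * opt"
      using True \<open>D \<ge> 0\<close> by (intro mult_left_mono) (auto simp: algebra_simps)
    ultimately show ?thesis using True low by (simp add: algebra_simps)
  next
    case False
    then show ?thesis using low opt
      by (simp add: cover_potential_def max_def min_def algebra_simps)
  qed
qed

lemma order_condition_prefix:
  assumes "order_condition X g Cs p" "C \<subset> X"
    and mono: "\<forall>A B. A \<subseteq> B \<and> B \<subseteq> X \<longrightarrow> g A \<le> g B"
    and Cs: "Cs \<subseteq> X" "g Cs = g X"
  obtains vs t where "distinct vs" "set vs = Cs - C" "t \<le> length vs"
    "g (set (take t vs) \<union> C) = g X"
    "\<And>k. k < t \<Longrightarrow> g (set (take k vs) \<union> C \<union> {vs ! k}) - g (set (take k vs) \<union> C)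
                       \<le> g (C \<union> {vs ! k}) - g C + p"
proof -
  obtain vs where vs: "distinct vs" "set vs = Cs - C" and
    ineq: "\<forall>i\<in>{1..LEAST i. g (set (take i vs) \<union> C) = g X}.
      g (set (take (i - 1) vs) \<union> C \<union> {vs ! (i - 1)}) - g (set (take (i - 1) vs) \<union> C)
        \<le> g (C \<union> {vs ! (i - 1)}) - g C + p"
    using assms(1,2) unfolding order_condition_def Let_def by blast
  define t where "t = (LEAST i. g (set (take i vs) \<union> C) = g X)"
  have "set (take (length vs) vs) \<union> C = Cs \<union> C" using vs by simp
  moreover have "g (Cs \<union> C) = g X"
    using mono Cs \<open>C \<subset> X\<close> by (metis Un_least Un_upper1 order_antisym order_refl psubsetE)
  ultimately have full: "g (set (take (length vs) vs) \<union> C) = g X" by simp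
  show thesis
  proof
    show "t \<le> length vs" unfolding t_def using full by (rule Least_le)
    show "g (set (take t vs) \<union> C) = g X" unfolding t_def using full by (rule LeastI)
    show "g (set (take k vs) \<union> C \<union> {vs ! k}) - g (set (take k vs) \<union> C)
            \<le> g (C \<union> {vs ! k}) - g C + p" if "k < t" for k
      using ineq[folded t_def, rule_format, of "Suc k"] that by simp
  qed (use vs in auto)
qed

lemma order_condition_gap_le_sum:
  assumes "order_condition X g Cs p" "C \<subset> X"
    and "\<forall>A B. A \<subseteq> B \<and> B \<subseteq> X \<longrightarrow> g A \<le> g B"
    and "Cs \<subseteq> X" "g Cs = g X"
  obtains T where "T \<subseteq> Cs - C" "g X - g C \<le> (\<Sum>v\<in>T. g (C \<union> {v}) - g C + p)"
proof -
  obtain vs t where vs: "distinct vs" "set vs = Cs - C" "t \<le> length vs"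
    and full: "g (set (take t vs) \<union> C) = g X"
    and ineq: "\<And>k. k < t \<Longrightarrow> g (set (take k vs) \<union> C \<union> {vs ! k}) - g (set (take k vs) \<union> C)
                       \<le> g (C \<union> {vs ! k}) - g C + p"
    using order_condition_prefix[OF assms] by metis
  define f where "f k = g (set (take k vs) \<union> C)" for k
  have "g X - g C = f t - f 0"
    using full by (simp add: f_def)
  also have "\<dots> = (\<Sum>k<t. f (Suc k) - f k)"
    by (rule sum_lessThan_telescope[symmetric])
  also have "\<dots> \<le> (\<Sum>k<t. g (C \<union> {vs ! k}) - g C + p)"
  proof (rule sum_mono)
    fix k assume "k \<in> {..<t}"
    then have "k < length vs" "k < t" using vs by auto
    then have "set (take (Suc k) vs) \<union> C = set (take k vs) \<union> C \<union> {vs ! k}"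
      by (auto simp: take_Suc_conv_app_nth)
    then have "f (Suc k) - f k = g (set (take k vs) \<union> C \<union> {vs ! k}) - g (set (take k vs) \<union> C)"
      by (simp add: f_def)
    then show "f (Suc k) - f k \<le> g (C \<union> {vs ! k}) - g C + p"
      using ineq[OF \<open>k < t\<close>] by simp
  qed
  also have "\<dots> = (\<Sum>v\<in>set (take t vs). g (C \<union> {v}) - g C + p)"
  proof -
    have "set (take t vs) = (!) vs ` {..<t}"
      using vs by (simp add: nth_image lessThan_atLeast0)
    moreover have "inj_on ((!) vs) {..<t}"
      using vs by (simp add: inj_on_nth)
    ultimately show ?thesis by (simp add: sum.reindex)
  qed
  finally have "g X - g C \<le> (\<Sum>v\<in>set (take t vs). g (C \<union> {v}) - g C + p)" .
  moreover have "set (take t vs) \<subseteq> Cs - C" using vs(2) set_take_subset by metis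
  ultimately show thesis using that by blast
qed

lemma order_condition_nonneg:
  assumes "order_condition X g Cs p" "C \<subset> X" "g C \<noteq> g X"
    and "\<forall>A B. A \<subseteq> B \<and> B \<subseteq> X \<longrightarrow> g A \<le> g B"
    and "Cs \<subseteq> X" "g Cs = g X"
  shows "p \<ge> 0"
proof -
  obtain vs t where "distinct vs" "set vs = Cs - C" "t \<le> length vs"
    and full: "g (set (take t vs) \<union> C) = g X"
    and ineq: "\<And>k. k < t \<Longrightarrow> g (set (take k vs) \<union> C \<union> {vs ! k}) - g (set (take k vs) \<union> C)
                       \<le> g (C \<union> {vs ! k}) - g C + p"
    using order_condition_prefix[OF assms(1,2,4-)] by metis
  have "t \<noteq> 0"
  proof
    assume "t = 0"
    with full \<open>g C \<noteq> g X\<close> show False by simp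
  qed
  then show ?thesis using ineq[of 0] by simp
qed

lemma finite_positive_gains:
  assumes "finite X"
  shows "finite {g (C \<union> {v}) - g C | C v. C \<subset> X \<and> v \<in> X - C \<and> g (C \<union> {v}) > g C}"
proof (rule finite_subset)
  show "{g (C \<union> {v}) - g C | C v. C \<subset> X \<and> v \<in> X - C \<and> g (C \<union> {v}) > g C}
        \<subseteq> (\<lambda>(C, v). g (C \<union> {v}) - g C) ` (Pow X \<times> X)"
    by (force intro: rev_image_eqI)
qed (use assms in simp)

lemma min_gain_le:
  assumes "finite X" "C \<subset> X" "v \<in> X - C" "g C < g (C \<union> {v})"
  shows "min_gain X g \<le> g (C \<union> {v}) - g C"
  unfolding min_gain_def using assms by (intro Min_le finite_positive_gains) blast+

lemma min_gain_pos:
  assumes "finite X" "C \<subset> X" "v \<in> X - C" "g C < g (C \<union> {v})"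
  shows "min_gain X g > 0"
proof -
  have "min_gain X g \<in> {g (C \<union> {v}) - g C | C v. C \<subset> X \<and> v \<in> X - C \<and> g (C \<union> {v}) > g C}"
    unfolding min_gain_def using assms by (intro Min_in finite_positive_gains) blast+
  then show ?thesis by auto
qed

lemma wt_mono:
  assumes "finite B" "A \<subseteq> B" "\<forall>v\<in>B. 0 \<le> w v"
  shows "wt w A \<le> wt w B"
  unfolding wt_def using assms by (intro sum_mono2) auto

lemma greedy_reach_subset: "greedy_reach X w g C \<Longrightarrow> C \<subseteq> X"
  by (induction rule: greedy_reach.induct) auto

lemma greedy_reach_eq_empty: "greedy_reach X w g C \<Longrightarrow> g {} = g X \<Longrightarrow> C = {}"
  by (induction rule: greedy_reach.induct) auto

lemma greedy_output_feasible:
  assumes "\<forall>A B. A \<subseteq> B \<and> B \<subseteq> X \<longrightarrow> g A \<le> g B" "greedy_output X w g C"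
  shows "C \<subseteq> X \<and> g C = g X"
proof -
  have "C \<subseteq> X" "\<not> g C < g X"
    using assms(2) greedy_reach_subset unfolding greedy_output_def by blast+
  moreover have "g C \<le> g X" using assms(1)[rule_format, of C X] \<open>C \<subseteq> X\<close> by blast
  ultimately show ?thesis by simp
qed

lemma greedy_output_exists:
  assumes "finite X"
  shows "\<exists>C. greedy_output X w g C"
proof -
  have "\<exists>C'. greedy_output X w g C'" if "greedy_reach X w g C" for C
    using that
  proof (induction "card (X - C)" arbitrary: C rule: less_induct)
    case less
    show ?case
    proof (cases "g C < g X")
      case False
      then show ?thesis using less.prems unfolding greedy_output_def by blast
    next
      case True
      then have "X - C \<noteq> {}" using greedy_reach_subset[OF less.prems] by auto
      define ratio where "ratio v = (g (C \<union> {v}) - g C) / w v" for v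
      have "Max (ratio ` (X - C)) \<in> ratio ` (X - C)"
        using \<open>X - C \<noteq> {}\<close> assms by (intro Max_in) auto
      then obtain b where b: "b \<in> X - C" "\<forall>v\<in>X - C. ratio v \<le> ratio b"
        using assms by (metis Max_ge finite_Diff finite_imageI imageE image_eqI)
      then have "greedy_reach X w g (C \<union> {b})"
        using greedy_reach.step[OF less.prems True] unfolding ratio_def by blast
      moreover have "X - (C \<union> {b}) = (X - C) - {b}" by blast
      then have "card (X - (C \<union> {b})) < card (X - C)"
        using card_Diff1_less[of "X - C" b] b(1) assms by simp
      ultimately show ?thesis using less.hyps by blast
    qed
  qed
  then show ?thesis using greedy_reach.start by blast
qed

context
  fixes X :: "'a set" and w :: "'a \<Rightarrow> real" and g :: "'a set \<Rightarrow> real"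
    and Cs :: "'a set" and p :: real
  assumes finX: "finite X"
    and w_ge_1: "\<forall>v\<in>X. 1 \<le> w v"
    and gmono: "\<forall>A B. A \<subseteq> B \<and> B \<subseteq> X \<longrightarrow> g A \<le> g B"
    and Cs_feas: "Cs \<subseteq> X" "g Cs = g X"
    and cond_i: "\<forall>C. C \<subset> X \<and> g C < g X \<longrightarrow> (\<exists>v\<in>X - C. g (C \<union> {v}) - g C > 0)"
    and cond_ii: "order_condition X g Cs p"
    and p_nonneg: "p \<ge> 0"
begin

lemma greedy_choice_gain_pos:
  assumes "C \<subset> X" "g C < g X" "b \<in> X - C"
    and bmax: "\<forall>v\<in>X - C. (g (C \<union> {v}) - g C) / w v \<le> (g (C \<union> {b}) - g C) / w b"
  shows "g C < g (C \<union> {b})"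
proof -
  obtain v where v: "v \<in> X - C" "g (C \<union> {v}) - g C > 0" using cond_i assms(1,2) by blast
  then have "0 < (g (C \<union> {v}) - g C) / w v" using w_ge_1 by force
  also have "\<dots> \<le> (g (C \<union> {b}) - g C) / w b" using bmax v(1) by blast
  finally have "0 < (g (C \<union> {b}) - g C) / w b" .
  moreover have "w b > 0" using w_ge_1 \<open>b \<in> X - C\<close> by force
  ultimately show ?thesis by (simp add: zero_less_divide_iff)
qed

lemma greedy_step_bound:
  assumes "C \<subset> X" "b \<in> X - C"
    and bmax: "\<forall>v\<in>X - C. (g (C \<union> {v}) - g C) / w v \<le> (g (C \<union> {b}) - g C) / w b"
  shows "w b * (g X - g C - p * wt w Cs) \<le> wt w Cs * (g (C \<union> {b}) - g C)"
proof -
  define r where "r = (g (C \<union> {b}) - g C) / w b"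
  have wb: "w b > 0" using w_ge_1 assms(2) by force
  have "C \<union> {b} \<subseteq> X" using assms(1,2) by blast
  then have "g C \<le> g (C \<union> {b})" using gmono[rule_format, of C "C \<union> {b}"] by blast
  then have "r \<ge> 0" using wb by (simp add: r_def)
  obtain T where T: "T \<subseteq> Cs - C" and gap: "g X - g C \<le> (\<Sum>v\<in>T. g (C \<union> {v}) - g C + p)"
    using order_condition_gap_le_sum[OF cond_ii \<open>C \<subset> X\<close> gmono Cs_feas] by metis
  have "(\<Sum>v\<in>T. g (C \<union> {v}) - g C + p) \<le> (\<Sum>v\<in>T. (r + p) * w v)"
  proof (rule sum_mono)
    fix v assume "v \<in> T"
    then have v: "v \<in> X - C" using T Cs_feas by blast
    then have "1 \<le> w v" using w_ge_1 by blast
    have "(g (C \<union> {v}) - g C) / w v \<le> r" unfolding r_def using bmax v by blast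
    then have "g (C \<union> {v}) - g C \<le> r * w v" using \<open>1 \<le> w v\<close> by (simp add: pos_divide_le_eq)
    moreover have "p \<le> p * w v" using p_nonneg \<open>1 \<le> w v\<close> mult_left_mono[of 1 "w v" p] by simp
    ultimately show "g (C \<union> {v}) - g C + p \<le> (r + p) * w v" by (simp add: distrib_right)
  qed
  also have "\<dots> = (r + p) * wt w T" by (simp add: wt_def sum_distrib_left)
  also have "\<dots> \<le> (r + p) * wt w Cs"
  proof (rule mult_left_mono)
    show "wt w T \<le> wt w Cs"
      using T Cs_feas w_ge_1 finite_subset[OF Cs_feas(1) finX] by (intro wt_mono) force+
  qed (use \<open>r \<ge> 0\<close> p_nonneg in simp)
  also have "\<dots> = r * wt w Cs + p * wt w Cs" by (rule distrib_right)
  finally have "g X - g C - p * wt w Cs \<le> r * wt w Cs" using gap by linarith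
  then have "w b * (g X - g C - p * wt w Cs) \<le> w b * (r * wt w Cs)"
    using wb by (intro mult_left_mono) auto
  also have "\<dots> = wt w Cs * (g (C \<union> {b}) - g C)" using wb by (simp add: r_def)
  finally show ?thesis .
qed

lemma greedy_reach_weight_le_potential:
  assumes opt: "wt w Cs > 0" and "greedy_reach X w g A"
  defines "\<Phi> \<equiv> cover_potential (wt w Cs) (Max (w ` X) / min_gain X g)"
    and "R \<equiv> \<lambda>A. g X - g A - p * wt w Cs"
  shows "wt w A \<le> \<Phi> (R {}) - \<Phi> (R A)"
  using assms(2)
proof (induction rule: greedy_reach.induct)
  case start
  then show ?case by (simp add: wt_def)
next
  case (step A b)
  have "A \<subset> X" using greedy_reach_subset[OF step.hyps(1)] step.hyps(2) by auto
  have gain: "g A < g (A \<union> {b})"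
    using greedy_choice_gain_pos[OF \<open>A \<subset> X\<close> step.hyps(2-4)] .
  have "w b \<le> Max (w ` X) / min_gain X g * (g (A \<union> {b}) - g A)"
  proof -
    have "0 < min_gain X g" by (rule min_gain_pos[OF finX \<open>A \<subset> X\<close> step.hyps(3) gain])
    moreover have "min_gain X g \<le> g (A \<union> {b}) - g A"
      by (rule min_gain_le[OF finX \<open>A \<subset> X\<close> step.hyps(3) gain])
    ultimately have "1 \<le> (g (A \<union> {b}) - g A) / min_gain X g" by simp
    moreover have "w b \<le> Max (w ` X)" using finX step.hyps(3) by simp
    moreover have "0 \<le> w b" using w_ge_1 step.hyps(3) by force
    ultimately have "w b * 1 \<le> Max (w ` X) * ((g (A \<union> {b}) - g A) / min_gain X g)"
      by (intro mult_mono) auto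
    then show ?thesis by simp
  qed
  moreover have "w b * R A \<le> wt w Cs * (R A - R (A \<union> {b}))"
    using greedy_step_bound[OF \<open>A \<subset> X\<close> step.hyps(3,4)] by (simp add: R_def)
  ultimately have "w b \<le> \<Phi> (R A) - \<Phi> (R (A \<union> {b}))"
    unfolding \<Phi>_def using gain opt by (intro cover_potential_decrease) (auto simp: R_def)
  moreover have "finite A" using greedy_reach_subset[OF step.hyps(1)] finX by (rule finite_subset)
  then have "wt w (A \<union> {b}) = wt w A + w b" using step.hyps(3) by (simp add: wt_def)
  ultimately show ?case using step.IH by simp
qed

lemma greedy_output_weight_le:
  assumes "g {} = 0" "0 < g X" "greedy_output X w g C"
  shows "wt w C \<le> ((p + 1) * Max (w ` X) / min_gain X g
                      + (if g X - (p + 1) * wt w Cs \<le> 0 then 0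
                         else ln ((g X - p * wt w Cs) / wt w Cs))) * wt w Cs"
proof -
  have "Cs \<noteq> {}" using Cs_feas assms(1,2) by auto
  then have opt: "wt w Cs > 0"
    unfolding wt_def using Cs_feas w_ge_1 finite_subset[OF Cs_feas(1) finX]
    by (intro sum_pos) force+
  have "{} \<subset> X" using \<open>Cs \<noteq> {}\<close> Cs_feas by blast
  then obtain v where v: "v \<in> X - {}" "0 < g ({} \<union> {v}) - g {}"
    using cond_i[rule_format, of "{}"] assms(1,2) by auto
  then have "0 < min_gain X g" using min_gain_pos[OF finX \<open>{} \<subset> X\<close> v(1)] by simp
  moreover have "1 \<le> w v" "w v \<le> Max (w ` X)" using finX v(1) w_ge_1 by auto
  ultimately have "0 \<le> Max (w ` X) / min_gain X g" by simp
  have reach: "greedy_reach X w g C" using assms(3) unfolding greedy_output_def by blast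
  have "g C = g X" using greedy_output_feasible[OF gmono assms(3)] by blast
  have "wt w C \<le> cover_potential (wt w Cs) (Max (w ` X) / min_gain X g) (g X - g {} - p * wt w Cs)
      - cover_potential (wt w Cs) (Max (w ` X) / min_gain X g) (g X - g C - p * wt w Cs)"
    by (rule greedy_reach_weight_le_potential[OF opt reach])
  then have "wt w C \<le> cover_potential (wt w Cs) (Max (w ` X) / min_gain X g) (g X - p * wt w Cs)
      - cover_potential (wt w Cs) (Max (w ` X) / min_gain X g) (- p * wt w Cs)"
    using assms(1) \<open>g C = g X\<close> by simp
  also have "\<dots> \<le> ((p + 1) * (Max (w ` X) / min_gain X g)
                      + (if g X - (p + 1) * wt w Cs \<le> 0 then 0
                         else ln ((g X - p * wt w Cs) / wt w Cs))) * wt w Cs"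
    by (rule cover_potential_diff_le[OF opt \<open>0 \<le> Max (w ` X) / min_gain X g\<close> p_nonneg])
  finally show ?thesis by simp
qed

end

theorem theorem1:
  fixes X :: "'a set" and w :: "'a \<Rightarrow> real" and g :: "'a set \<Rightarrow> real"
    and Cs :: "'a set" and p :: real
  assumes finX: "finite X" and neX: "X \<noteq> {}"
    and wpos: "\<forall>v\<in>X. w v > 0"
    and wmin: "Min (w ` X) = 1"
    and gnonneg: "\<forall>A. A \<subseteq> X \<longrightarrow> g A \<ge> 0"
    and gmono: "\<forall>A B. A \<subseteq> B \<and> B \<subseteq> X \<longrightarrow> g A \<le> g B"
    and gempty: "g {} = 0"
    and Cs_feas: "Cs \<subseteq> X" "g Cs = g X"
    and Cs_opt: "\<forall>C. C \<subseteq> X \<and> g C = g X \<longrightarrow> wt w Cs \<le> wt w C"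
    and cond_i: "\<forall>C. C \<subset> X \<and> g C < g X \<longrightarrow> (\<exists>v\<in>X - C. g (C \<union> {v}) - g C > 0)"
    and cond_ii: "order_condition X g Cs p"
  shows "(\<exists>C. greedy_output X w g C) \<and>
         (\<forall>C. greedy_output X w g C \<longrightarrow>
            C \<subseteq> X \<and> g C = g X \<and>
            wt w C \<le> ((p + 1) * Max (w ` X) / min_gain X g
                      + (if g X - (p + 1) * wt w Cs \<le> 0 then 0
                         else ln ((g X - p * wt w Cs) / wt w Cs))) * wt w Cs)"
proof (intro conjI allI impI)
  show "\<exists>C. greedy_output X w g C" using greedy_output_exists[OF finX] .
  fix C assume out: "greedy_output X w g C"
  show "C \<subseteq> X" "g C = g X" using greedy_output_feasible[OF gmono out] by blast+
  have w_ge_1: "\<forall>v\<in>X. 1 \<le> w v" using finX wmin by (metis Min_le finite_imageI imageI)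
  show "wt w C \<le> ((p + 1) * Max (w ` X) / min_gain X g
                      + (if g X - (p + 1) * wt w Cs \<le> 0 then 0
                         else ln ((g X - p * wt w Cs) / wt w Cs))) * wt w Cs"
  proof (cases "g X = 0")
    case True
    then have "C = {}"
      using out greedy_reach_eq_empty[of X w g C] gempty unfolding greedy_output_def by simp
    moreover have "wt w Cs = 0"
    proof (rule antisym)
      show "wt w Cs \<le> 0" using Cs_opt[rule_format, of "{}"] True gempty by (simp add: wt_def)
      show "0 \<le> wt w Cs" unfolding wt_def using Cs_feas w_ge_1 by (intro sum_nonneg) force
    qed
    ultimately show ?thesis by (simp add: wt_def)
  next
    case False
    then have "{} \<subset> X" "g {} \<noteq> g X" using neX gempty by auto
    then have "p \<ge> 0" using order_condition_nonneg[OF cond_ii _ _ gmono Cs_feas] by blast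
    moreover have "0 < g X" using False gnonneg by (simp add: less_le)
    ultimately show ?thesis
      using greedy_output_weight_le[OF finX w_ge_1 gmono Cs_feas cond_i cond_ii _ gempty _ out] by blast
  qed
qed

end
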